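(* Let $n$ be a positive integer and let $P_n$ denote the path on $n$ vertices. Then $P_n$ is super edge-graceful if and only if $n \neq 2$ and $n \neq 4$.
   Context: All graphs are simple, finite and undirected. Let $G=(V,E)$ be a graph with $p=|V|$ vertices and $q=|E|$ edges. An edge labeling $f$ is a bijection $f:E\to\{0,\pm1,\pm2,\ldots,\pm\frac{q-1}{2}\}$ if $q$ is odd, and $f:E\to\{\pm1,\pm2,\ldots,\pm\frac{q}{2}\}$ if $q$ is even. For each vertex $x\in V$, the induced vertex label is $f^*(x)=\sum_{xy\in E}f(xy)$, the sum over all edges incident with $x$. The labeling $f$ is super edge-graceful if $f^*$ is a bijection from $V$ onto $\{0,\pm1,\pm2,\ldots,\pm\frac{p-1}{2}\}$ when $p$ is odd, and onto $\{\pm1,\pm2,\ldots,\pm\frac{p}{2}\}$ when $p$ is even. A graph is super edge-graceful if it admits a super edge-graceful labeling. *)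

theory Defs
  imports Main
begin

definition sym_label_set :: "nat \<Rightarrow> int set" where
  "sym_label_set m =
     (if odd m then {- ((int m - 1) div 2) .. (int m - 1) div 2}
      else {- (int m div 2) .. int m div 2} - {0})"

definition vertex_sum :: "'a set set \<Rightarrow> ('a set \<Rightarrow> int) \<Rightarrow> 'a \<Rightarrow> int" where
  "vertex_sum E f x = (\<Sum>e\<in>{e\<in>E. x \<in> e}. f e)"

definition super_edge_graceful_labeling :: "'a set \<Rightarrow> 'a set set \<Rightarrow> ('a set \<Rightarrow> int) \<Rightarrow> bool" where
  "super_edge_graceful_labeling V E f \<longleftrightarrow>
     bij_betw f E (sym_label_set (card E)) \<and>
     bij_betw (vertex_sum E f) V (sym_label_set (card V))"

definition super_edge_graceful :: "'a set \<Rightarrow> 'a set set \<Rightarrow> bool" where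
  "super_edge_graceful V E \<longleftrightarrow> (\<exists>f. super_edge_graceful_labeling V E f)"

definition path_vertices :: "nat \<Rightarrow> nat set" where
  "path_vertices n = {0..<n}"

definition path_edges :: "nat \<Rightarrow> nat set set" where
  "path_edges n = {{i, Suc i} | i. Suc i < n}"

end

theory Submission imports Defs begin

text \<open>Label the edge \<open>{i, i+1}\<close> of the path by \<open>a i\<close>; then vertex \<open>x\<close> receives
  \<open>a (x-1) + a x\<close>, with the missing term omitted at the two ends. For odd \<open>n = 2k+1\<close> the
  alternating sequence \<open>-k, 1, -k+1, 2, \<dots>\<close> makes the vertex sums \<open>x - k\<close>; for even \<open>n\<close>
  a similar interleaving, corrected near the ends and the middle, works once \<open>n \<ge> 6\<close>.
  For \<open>n = 2\<close> both vertices receive the same sum. For \<open>n = 4\<close> some edge carries label 0: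
  at a pendant edge it produces the forbidden vertex sum 0, and at the middle edge the
  first two vertices receive equal sums.\<close>

lemma sym_label_set_even: "sym_label_set (2*k) = {- int k..int k} - {0}"
  by (simp add: sym_label_set_def)

lemma sym_label_set_odd: "sym_label_set (2*k+1) = {- int k..int k}"
  by (simp add: sym_label_set_def)

lemma finite_sym_label_set: "finite (sym_label_set m)"
  by (simp add: sym_label_set_def)

lemma card_sym_label_set: "card (sym_label_set m) = m"
proof (cases "even m")
  case True
  then obtain k where "m = 2*k" by blast
  then show ?thesis by (simp add: sym_label_set_even card_Diff_singleton)
next
  case False
  then obtain k where "m = 2*k+1" by (metis oddE)
  then show ?thesis using sym_label_set_odd[of k] by simp
qed

lemma bij_betw_sym_label_setI:
  assumes "inj_on f {0..<m}" "f ` {0..<m} \<subseteq> sym_label_set m"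
  shows "bij_betw f {0..<m} (sym_label_set m)"
  using assms card_subset_eq[OF finite_sym_label_set assms(2)]
  by (simp add: bij_betw_def card_image card_sym_label_set)

lemma nat_even_odd_cases:
  fixes i :: nat
  obtains u where "i = 2*u" | u where "i = 2*u+1"
  by (metis oddE evenE)

lemma bij_betw_Min_path_edges: "bij_betw Min (path_edges n) {0..<n-1}"
  by (rule bij_betw_byWitness[where f' = "\<lambda>i. {i, Suc i}"])
     (auto simp: path_edges_def image_def)

lemma card_path_edges: "card (path_edges n) = n - 1"
  using bij_betw_same_card[OF bij_betw_Min_path_edges] by simp

lemma incident_path_edges:
  assumes "x < n"
  shows "{e \<in> path_edges n. x \<in> e} =
     (if 0 < x then {{x-1, x}} else {}) \<union> (if Suc x < n then {{x, Suc x}} else {})"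
  using assms by (auto simp: path_edges_def split: if_splits)

lemma vertex_sum_path_edges:
  assumes "x < n"
  shows "vertex_sum (path_edges n) f x =
     (if 0 < x then f {x-1, x} else 0) + (if Suc x < n then f {x, Suc x} else 0)"
proof -
  have "0 < x \<Longrightarrow> {x-1, x} \<noteq> {x, Suc x}" by (auto simp: doubleton_eq_iff)
  then show ?thesis
    unfolding vertex_sum_def incident_path_edges[OF assms] by (auto simp: sum.union_disjoint)
qed

definition path_label_sum :: "nat \<Rightarrow> (nat \<Rightarrow> int) \<Rightarrow> nat \<Rightarrow> int" where
  "path_label_sum n a x = (if 0 < x then a (x-1) else 0) + (if Suc x < n then a x else 0)"

lemma vertex_sum_path_edges_Min:
  "x < n \<Longrightarrow> vertex_sum (path_edges n) (\<lambda>e. a (Min e)) x = path_label_sum n a x"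
  by (simp add: vertex_sum_path_edges path_label_sum_def min_def)

lemma super_edge_graceful_pathI:
  assumes a: "bij_betw a {0..<n-1} (sym_label_set (n-1))"
    and v: "bij_betw v {0..<n} (sym_label_set n)"
    and sum_eq: "\<And>x. x < n \<Longrightarrow> path_label_sum n a x = v x"
  shows "super_edge_graceful (path_vertices n) (path_edges n)"
proof -
  have "bij_betw (a \<circ> Min) (path_edges n) (sym_label_set (card (path_edges n)))"
    using bij_betw_trans[OF bij_betw_Min_path_edges a] by (simp add: card_path_edges)
  moreover have "bij_betw (vertex_sum (path_edges n) (a \<circ> Min)) {0..<n} (sym_label_set n)"
    using v by (rule bij_betw_cong[THEN iffD2, rotated])
      (simp add: o_def vertex_sum_path_edges_Min sum_eq)
  ultimately show ?thesis
    unfolding super_edge_graceful_def path_vertices_def super_edge_graceful_labeling_def by auto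
qed

lemma super_edge_graceful_path_odd:
  "super_edge_graceful (path_vertices (2*k+1)) (path_edges (2*k+1))"
proof (rule super_edge_graceful_pathI)
  define a where "a i = (if even i then int (i div 2) - int k else int (i div 2) + 1)" for i
  show "bij_betw a {0..<2*k+1-1} (sym_label_set (2*k+1-1))"
  proof (simp, rule bij_betw_sym_label_setI)
    show "inj_on a {0..<2*k}" unfolding inj_on_def a_def
      by (intro ballI impI)
        (rule_tac i = x in nat_even_odd_cases; rule_tac i = y in nat_even_odd_cases; auto)
    show "a ` {0..<2*k} \<subseteq> sym_label_set (2*k)"
      unfolding image_subset_iff sym_label_set_even a_def
      by (intro ballI, rule_tac i = x in nat_even_odd_cases) auto
  qed
  show "bij_betw (\<lambda>x. int x - int k) {0..<2*k+1} (sym_label_set (2*k+1))"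
  proof (rule bij_betw_sym_label_setI)
    show "(\<lambda>x. int x - int k) ` {0..<2*k+1} \<subseteq> sym_label_set (2*k+1)"
      unfolding sym_label_set_odd by auto
  qed (simp add: inj_on_def)
  show "path_label_sum (2*k+1) a x = int x - int k" if "x < 2*k+1" for x
  proof (cases x)
    case (Suc y)
    with that show ?thesis
      by (cases y rule: nat_even_odd_cases) (auto simp: path_label_sum_def a_def)
  qed (simp add: path_label_sum_def a_def)
qed

lemma super_edge_graceful_path_4k:
  assumes k: "2 \<le> k"
  shows "super_edge_graceful (path_vertices (4*k)) (path_edges (4*k))"
proof (rule super_edge_graceful_pathI)
  define a where "a i =
    (if even i then (if i div 2 \<le> k then int (i div 2) - 1 else int (i div 2) - (2*int k + 1))
     else (if i div 2 + 2 \<le> k then int (i div 2) - (2*int k - 1) else int (i div 2) + 1))" for i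
  define v where "v x =
    (if x = 0 then -1 else if x = 4*k-1 then -2
     else if 2*k-1 \<le> x \<and> x \<le> 2*k+1 then int x - 1 else int x - (2*int k + 1))" for x
  have "4*k-1 = 2*(2*k-1)+1" "int (2*k-1) = 2*int k - 1" using k by simp_all
  then have edge_labels: "sym_label_set (4*k-1) = {-(2*int k - 1)..2*int k - 1}"
    by (metis sym_label_set_odd)
  show "bij_betw a {0..<4*k-1} (sym_label_set (4*k-1))"
  proof (rule bij_betw_sym_label_setI)
    show "inj_on a {0..<4*k-1}" unfolding inj_on_def a_def
      by (intro ballI impI)
        (rule_tac i = x in nat_even_odd_cases; rule_tac i = y in nat_even_odd_cases; auto split: if_splits)
    show "a ` {0..<4*k-1} \<subseteq> sym_label_set (4*k-1)"
      unfolding image_subset_iff edge_labels a_def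
      by (intro ballI, rule_tac i = x in nat_even_odd_cases) (use k in \<open>auto split: if_splits\<close>)
  qed
  have vertex_labels: "sym_label_set (4*k) = {-(2*int k)..2*int k} - {0}"
    using sym_label_set_even[of "2*k"] by simp
  show "bij_betw v {0..<4*k} (sym_label_set (4*k))"
  proof (rule bij_betw_sym_label_setI)
    show "inj_on v {0..<4*k}" unfolding inj_on_def v_def using k by (auto split: if_splits)
    show "v ` {0..<4*k} \<subseteq> sym_label_set (4*k)"
      unfolding vertex_labels v_def using k by (auto split: if_splits)
  qed
  show "path_label_sum (4*k) a x = v x" if "x < 4*k" for x
  proof (cases x)
    case (Suc y)
    have "Suc (Suc (Suc (2*u))) < 4*k \<longleftrightarrow> Suc (Suc (2*u)) < 4*k"
      "Suc (Suc (2*u)) \<noteq> 4*k - Suc 0" "2*u \<noteq> 4*k - Suc 0" for u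
      using k by presburger+
    with Suc that k show ?thesis
      by (cases y rule: nat_even_odd_cases) (auto simp: path_label_sum_def a_def v_def split: if_splits)
  qed (use k in \<open>simp add: path_label_sum_def a_def v_def\<close>)
qed

lemma super_edge_graceful_path_4k_plus_2:
  assumes k: "1 \<le> k"
  shows "super_edge_graceful (path_vertices (4*k+2)) (path_edges (4*k+2))"
proof (rule super_edge_graceful_pathI)
  define a where "a i =
    (if even i then (if i div 2 < k then int (i div 2) - 2*int k else int (i div 2) - (2*int k - 1))
     else (if i div 2 + 1 < k then int (i div 2) + 2
           else if i div 2 + 1 = k then - int k else int (i div 2) + 1))" for i
  define v where "v x =
    (if x = 0 then -2*int k else if x = 4*k+1 then 1 else if x = 2*k-1 then -(2*int k + 1)
     else if x = 2*k then -(2*int k - 1) else int x - (2*int k - 1))" for x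
  show "bij_betw a {0..<4*k+2-1} (sym_label_set (4*k+2-1))"
  proof (rule bij_betw_sym_label_setI)
    show "inj_on a {0..<4*k+2-1}" unfolding inj_on_def a_def
      by (intro ballI impI)
        (rule_tac i = x in nat_even_odd_cases; rule_tac i = y in nat_even_odd_cases;
         use k in \<open>auto split: if_splits\<close>)
    have edge_labels: "sym_label_set (4*k+2-1) = {-(2*int k)..2*int k}"
      using sym_label_set_odd[of "2*k"] by simp
    show "a ` {0..<4*k+2-1} \<subseteq> sym_label_set (4*k+2-1)"
      unfolding image_subset_iff edge_labels a_def
      by (intro ballI, rule_tac i = x in nat_even_odd_cases) (use k in \<open>auto split: if_splits\<close>)
  qed
  have vertex_labels: "sym_label_set (4*k+2) = {-(2*int k + 1)..2*int k + 1} - {0}"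
    using sym_label_set_even[of "2*k+1"] by (simp add: algebra_simps)
  show "bij_betw v {0..<4*k+2} (sym_label_set (4*k+2))"
  proof (rule bij_betw_sym_label_setI)
    show "inj_on v {0..<4*k+2}" unfolding inj_on_def v_def using k by (auto split: if_splits)
    show "v ` {0..<4*k+2} \<subseteq> sym_label_set (4*k+2)"
      unfolding vertex_labels v_def using k by (auto split: if_splits)
  qed
  show "path_label_sum (4*k+2) a x = v x" if "x < 4*k+2" for x
  proof (cases x)
    case (Suc y)
    have "Suc (Suc (Suc (2*u))) < 4*k+2 \<longleftrightarrow> Suc (Suc (2*u)) < 4*k+2"
      "Suc (Suc (2*u)) \<noteq> 4*k+1" "2*u \<noteq> 4*k+1" "2*u+1 \<noteq> 2*k" "2*u \<noteq> 2*k-1"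
      "Suc (Suc (2*u)) \<noteq> 2*k - 1" for u
      using k by presburger+
    with Suc that k show ?thesis
      by (cases y rule: nat_even_odd_cases) (auto simp: path_label_sum_def a_def v_def split: if_splits)
  qed (use k in \<open>simp add: path_label_sum_def a_def v_def\<close>)
qed

lemma not_super_edge_graceful_path_2: "\<not> super_edge_graceful (path_vertices 2) (path_edges 2)"
proof
  assume "super_edge_graceful (path_vertices 2) (path_edges 2)"
  then obtain f where "inj_on (vertex_sum (path_edges 2) f) {0..<2}"
    unfolding super_edge_graceful_def super_edge_graceful_labeling_def path_vertices_def bij_betw_def
    by blast
  moreover have "vertex_sum (path_edges 2) f 0 = vertex_sum (path_edges 2) f 1"
    by (simp add: vertex_sum_path_edges)
  ultimately show False unfolding inj_on_def by force
qed

lemma not_super_edge_graceful_path_4: "\<not> super_edge_graceful (path_vertices 4) (path_edges 4)"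
proof
  assume "super_edge_graceful (path_vertices 4) (path_edges 4)"
  then obtain f where f: "bij_betw f (path_edges 4) (sym_label_set 3)"
    and v: "bij_betw (vertex_sum (path_edges 4) f) {0..<4} (sym_label_set 4)"
    unfolding super_edge_graceful_def super_edge_graceful_labeling_def path_vertices_def
    by (auto simp: card_path_edges)
  have "0 \<in> f ` path_edges 4"
    using f sym_label_set_odd[of 1] unfolding bij_betw_def by simp
  then obtain i where i: "i < 3" "f {i, Suc i} = 0" unfolding path_edges_def by auto
  have sum_nonzero: "vertex_sum (path_edges 4) f x \<noteq> 0" if "x < 4" for x
    using v that sym_label_set_even[of 2] unfolding bij_betw_def by auto
  have sum_0: "vertex_sum (path_edges 4) f 0 = f {0, 1}"
    and sum_1: "vertex_sum (path_edges 4) f 1 = f {0, 1} + f {1, 2}"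
    and sum_3: "vertex_sum (path_edges 4) f 3 = f {2, 3}"
    by (simp_all add: vertex_sum_path_edges numeral_2_eq_2)
  consider "i = 0" | "i = 1" | "i = 2" using i by linarith
  then show False
  proof cases
    case 1 then show False using i sum_0 sum_nonzero[of 0] by simp
  next
    case 2
    then have "vertex_sum (path_edges 4) f 0 = vertex_sum (path_edges 4) f 1"
      using i sum_0 sum_1 by (simp add: numeral_eq_Suc)
    then show False using v unfolding bij_betw_def inj_on_def by force
  next
    case 3 then show False using i sum_3 sum_nonzero[of 3] by (simp add: numeral_eq_Suc)
  qed
qed

theorem theorem1:
  fixes n :: nat
  assumes "n \<ge> 1"
  shows "super_edge_graceful (path_vertices n) (path_edges n) \<longleftrightarrow> n \<noteq> 2 \<and> n \<noteq> 4"
proof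
  assume "super_edge_graceful (path_vertices n) (path_edges n)"
  then show "n \<noteq> 2 \<and> n \<noteq> 4"
    using not_super_edge_graceful_path_2 not_super_edge_graceful_path_4 by auto
next
  assume "n \<noteq> 2 \<and> n \<noteq> 4"
  with assms have "(\<exists>k. n = 2*k+1) \<or> (\<exists>k. n = 4*k \<and> 2 \<le> k) \<or> (\<exists>k. n = 4*k+2 \<and> 1 \<le> k)"
    by presburger
  then show "super_edge_graceful (path_vertices n) (path_edges n)"
    using super_edge_graceful_path_odd super_edge_graceful_path_4k super_edge_graceful_path_4k_plus_2
    by blast
qed

end
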